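(* Consider any sequences evolved by Algorithm 1, with $\gamma_k,\Gamma_k,\beta_k$ as in the context. For $k\ge0$ and $x\in\mathcal H$ put $\tilde x:=\frac{a_{k+1}}{A_{k+1}}x+\frac{A_k}{A_{k+1}}y^k$, $z^k:=\frac{a_{k+1}}{A_{k+1}}x^k+\frac{A_k}{A_{k+1}}y^k$ and $\Delta_k:=\frac{(1+\mu A_k)A_{k+1}}{2a_{k+1}^2}\|\tilde x-z^k\|^2+\frac{\mu A_k}{2a_{k+1}}\|\tilde x-y^k\|^2$. Then for all $k\ge0$ and $x\in\mathcal H$: (a) $a_{k+1}\gamma_{k+1}(x)+A_k\gamma_{k+1}(y^k)=A_{k+1}\gamma_{k+1}(\tilde x)+\frac{\mu a_{k+1}A_k}{2A_{k+1}}\|x-y^k\|^2$; (b) $A_kh(y^k)+A_{k+1}\Gamma_{k+1}(x)+\frac12\|x-x^0\|^2\ge\beta_k+A_{k+1}[\gamma_{k+1}(\tilde x)+\Delta_k]$; (c) $\Delta_k=\frac{1}{2\lambda_{k+1}}\Big[\|\tilde x-\tilde x^k\|^2+\frac{\mu(1+\mu A_k)\lambda_{k+1}^2A_k}{a_{k+1}A_{k+1}}\|x^k-y^k\|^2\Big]$; (d) $A_kh(y^k)+A_{k+1}\Gamma_{k+1}(x)+\frac12\|x-x^0\|^2\ge\beta_k+A_{k+1}h(y^{k+1})+\frac{1-\sigma^2}{2}\cdot\frac{A_{k+1}}{\lambda_{k+1}}\|y^{k+1}-\tilde x^k\|^2+\frac{\mu(1+\mu A_k)\lambda_{k+1}A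_k}{2a_{k+1}}\|x^k-y^k\|^2$.
   Context: Setting: $\mathcal H$ is a finite-dimensional real inner product space with inner product $\langle\cdot,\cdot\rangle$ and norm $\|\cdot\|$. $f,g:\mathcal H\to(-\infty,\infty]$ are proper, closed, convex functions, $h:=f+g$ has nonempty domain, and $g$ is $\mu$-strongly convex for some $\mu>0$, i.e. $g(tx+(1-t)y)\le tg(x)+(1-t)g(y)-\frac{\mu}{2}t(1-t)\|x-y\|^2$ for all $x,y\in\mathcal H$, $t\in[0,1]$. $x^*$ denotes the unique minimizer of $h$. For $\varepsilon\ge 0$, $\partial_\varepsilon f(y):=\{u\in\mathcal H: f(w)\ge f(y)+\langle u,w-y\rangle-\varepsilon\ \forall w\in\mathcal H\}$, and $\partial g:=\partial_0 g$. Algorithm 1: Choose $x^0,y^0\in\mathcal H$ and $\sigma\in[0,1]$, and set $A_0=0$. For $k=0,1,2,\dots$: choose $\lambda_{k+1}>0$, set $a_{k+1}=\frac{(1+2\mu A_k)\lambda_{k+1}+\sqrt{(1+2\mu A_k)^2\lambda_{k+1}^2+4(1+\mu A_k)A_k\lambda_{k+1}}}{2}$ and $\tilde x^k=\frac{a_{k+1}-\mu A_k\lambda_{k+1}}{A_k+a_{k+1}}x^k+\frac{A_k+\mu A_k\lambda_{k+1}}{A_k+a_{k+1}}y^k$; compute $(y^{k+1},v^{k+1},\varepsilon_{k+1})\in\mathcal H\times\mathcal H\times[0,\infty)$ such that $v^{k+1}\in\partial_{\varepsilon_{k+1}}f(y^{k+1})+\partial g(y^{k+1})$ and $\frac{\|\lambda_{k+1}v^{k+1}+y^{k+1}-\tilde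 x^k\|^2}{1+\lambda_{k+1}\mu}+2\lambda_{k+1}\varepsilon_{k+1}\le\sigma^2\|y^{k+1}-\tilde x^k\|^2$; then set $A_{k+1}=A_k+a_{k+1}$ and $x^{k+1}=\frac{1+\mu A_k}{1+\mu A_{k+1}}x^k+\frac{\mu a_{k+1}}{1+\mu A_{k+1}}y^{k+1}-\frac{a_{k+1}}{1+\mu A_{k+1}}v^{k+1}$. "Sequences evolved by Algorithm 1" means any sequences satisfying all these relations for every $k\ge 0$. Auxiliary functions: for $k\ge1$ and $x\in\mathcal H$, $\gamma_k(x):=h(y^k)+\langle v^k,x-y^k\rangle-\varepsilon_k+\frac{\mu}{2}\|x-y^k\|^2$; $\Gamma_0\equiv 0$ and, for $k\ge1$, $\Gamma_k(x):=\sum_{j=1}^k\frac{a_j}{A_k}\gamma_j(x)$ (so $A_k\Gamma_k=\sum_{j=1}^k a_j\gamma_j$). For $k\ge0$, $\beta_k:=\inf_{x\in\mathcal H}\{A_k\Gamma_k(x)+\frac12\|x-x^0\|^2\}$ (so $\beta_0=0$). *)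

theory Defs
  imports "HOL-Analysis.Analysis" "HOL-Library.Extended_Real"
begin

definition proper_fun :: "('a \<Rightarrow> ereal) \<Rightarrow> bool" where
  "proper_fun f \<longleftrightarrow> (\<forall>x. f x \<noteq> -\<infinity>) \<and> (\<exists>x. f x \<noteq> \<infinity>)"

definition epigraph_e :: "('a \<Rightarrow> ereal) \<Rightarrow> ('a \<times> real) set" where
  "epigraph_e f = {(x, t). f x \<le> ereal t}"

definition closed_fun :: "('a::topological_space \<Rightarrow> ereal) \<Rightarrow> bool" where
  "closed_fun f \<longleftrightarrow> closed (epigraph_e f)"

definition convex_fun :: "('a::real_vector \<Rightarrow> ereal) \<Rightarrow> bool" where
  "convex_fun f \<longleftrightarrow> convex (epigraph_e f)"

definition strongly_convex_fun :: "real \<Rightarrow> ('a::real_normed_vector \<Rightarrow> ereal) \<Rightarrow> bool" where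
  "strongly_convex_fun \<mu> g \<longleftrightarrow>
     (\<forall>x y t. 0 \<le> t \<and> t \<le> 1 \<longrightarrow>
        g (t *\<^sub>R x + (1 - t) *\<^sub>R y)
          \<le> ereal t * g x + ereal (1 - t) * g y - ereal (\<mu> / 2 * t * (1 - t) * norm (x - y)^2))"

definition eps_subdiff :: "('a::real_inner \<Rightarrow> ereal) \<Rightarrow> real \<Rightarrow> 'a \<Rightarrow> 'a set" where
  "eps_subdiff f \<epsilon> y = {u. \<forall>w. f w \<ge> f y + ereal (inner u (w - y)) - ereal \<epsilon>}"

definition subdiff :: "('a::real_inner \<Rightarrow> ereal) \<Rightarrow> 'a \<Rightarrow> 'a set" where
  "subdiff f y = eps_subdiff f 0 y"

definition algorithm1 ::
  "('a::euclidean_space \<Rightarrow> ereal) \<Rightarrow> ('a \<Rightarrow> ereal) \<Rightarrow> real \<Rightarrow> real \<Rightarrow>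
   (nat \<Rightarrow> 'a) \<Rightarrow> (nat \<Rightarrow> 'a) \<Rightarrow> (nat \<Rightarrow> 'a) \<Rightarrow> (nat \<Rightarrow> real) \<Rightarrow> (nat \<Rightarrow> real) \<Rightarrow>
   (nat \<Rightarrow> real) \<Rightarrow> (nat \<Rightarrow> real) \<Rightarrow> (nat \<Rightarrow> 'a) \<Rightarrow> bool" where
  "algorithm1 f g \<mu> \<sigma> x y v eps lam a A xt \<longleftrightarrow>
     0 \<le> \<sigma> \<and> \<sigma> \<le> 1 \<and> A 0 = 0 \<and>
     (\<forall>k. lam (Suc k) > 0 \<and>
       a (Suc k) = ((1 + 2 * \<mu> * A k) * lam (Suc k)
                    + sqrt (((1 + 2 * \<mu> * A k) * lam (Suc k))^2
                            + 4 * (1 + \<mu> * A k) * A k * lam (Suc k))) / 2 \<and>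
       xt k = ((a (Suc k) - \<mu> * A k * lam (Suc k)) / (A k + a (Suc k))) *\<^sub>R x k
              + ((A k + \<mu> * A k * lam (Suc k)) / (A k + a (Suc k))) *\<^sub>R y k \<and>
       eps (Suc k) \<ge> 0 \<and>
       (\<exists>u w. u \<in> eps_subdiff f (eps (Suc k)) (y (Suc k)) \<and> w \<in> subdiff g (y (Suc k))
              \<and> v (Suc k) = u + w) \<and>
       norm (lam (Suc k) *\<^sub>R v (Suc k) + y (Suc k) - xt k)^2 / (1 + lam (Suc k) * \<mu>)
         + 2 * lam (Suc k) * eps (Suc k) \<le> \<sigma>^2 * norm (y (Suc k) - xt k)^2 \<and>
       A (Suc k) = A k + a (Suc k) \<and>
       x (Suc k) = ((1 + \<mu> * A k) / (1 + \<mu> * A (Suc k))) *\<^sub>R x k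
                   + (\<mu> * a (Suc k) / (1 + \<mu> * A (Suc k))) *\<^sub>R y (Suc k)
                   - (a (Suc k) / (1 + \<mu> * A (Suc k))) *\<^sub>R v (Suc k))"

text \<open>gamma_k(z) = h(y^k) + <v^k, z - y^k> - eps_k + mu/2 |z - y^k|^2, with h = f + g
  (meaningful for k >= 1).\<close>
definition gam :: "('a::real_inner \<Rightarrow> ereal) \<Rightarrow> ('a \<Rightarrow> ereal) \<Rightarrow> real \<Rightarrow>
   (nat \<Rightarrow> 'a) \<Rightarrow> (nat \<Rightarrow> 'a) \<Rightarrow> (nat \<Rightarrow> real) \<Rightarrow> nat \<Rightarrow> 'a \<Rightarrow> ereal" where
  "gam f g \<mu> y v eps k z =
     (f (y k) + g (y k)) + ereal (inner (v k) (z - y k) - eps k + \<mu> / 2 * norm (z - y k)^2)"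

definition Gam :: "('a::real_inner \<Rightarrow> ereal) \<Rightarrow> ('a \<Rightarrow> ereal) \<Rightarrow> real \<Rightarrow>
   (nat \<Rightarrow> 'a) \<Rightarrow> (nat \<Rightarrow> 'a) \<Rightarrow> (nat \<Rightarrow> real) \<Rightarrow> (nat \<Rightarrow> real) \<Rightarrow> (nat \<Rightarrow> real) \<Rightarrow>
   nat \<Rightarrow> 'a \<Rightarrow> ereal" where
  "Gam f g \<mu> y v eps a A k z =
     (if k = 0 then 0 else (\<Sum>j\<in>{1..k}. ereal (a j / A k) * gam f g \<mu> y v eps j z))"

definition bet :: "('a::real_inner \<Rightarrow> ereal) \<Rightarrow> ('a \<Rightarrow> ereal) \<Rightarrow> real \<Rightarrow>
   (nat \<Rightarrow> 'a) \<Rightarrow> (nat \<Rightarrow> 'a) \<Rightarrow> (nat \<Rightarrow> 'a) \<Rightarrow> (nat \<Rightarrow> real) \<Rightarrow> (nat \<Rightarrow> real) \<Rightarrow> (nat \<Rightarrow> real) \<Rightarrow>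
   nat \<Rightarrow> ereal" where
  "bet f g \<mu> x y v eps a A k =
     (INF z. ereal (A k) * Gam f g \<mu> y v eps a A k z + ereal (1/2 * norm (z - x 0)^2))"

end

theory Submission
  imports Defs
begin

text \<open>
  Write Phi_k = A_k Gamma_k + 1/2 |. - x^0|^2. This is a quadratic with Hessian (1 + mu A_k) I, and
  the update of x^k is precisely its minimiser; hence beta_k = Phi_k(x^k) and
  Phi_{k+1} = beta_k + (1 + mu A_k)/2 |. - x^k|^2 + a_{k+1} gamma_{k+1}.
  Since gamma_{k+1} minorises h (it is built from an epsilon-subgradient of f and a subgradient of
  the strongly convex g), replacing h(y^k) by gamma_{k+1}(y^k) and recombining the quadratics as in
  (a) gives (b). Part (c) is an identity between quadratics that holds because a_{k+1} solves
  a_{k+1}^2 = lambda_{k+1}((1 + mu A_k) A_{k+1} + mu A_k a_{k+1}). Finally, the relative error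
  condition bounds gamma_{k+1} + |. - x~^k|^2/(2 lambda_{k+1}) below by
  h(y^{k+1}) + (1 - sigma^2)/(2 lambda_{k+1}) |y^{k+1} - x~^k|^2, which turns (b) and (c) into (d).
\<close>

lemma norm_add_square:
  fixes p q :: "'a::real_inner"
  shows "norm (p + q)^2 = norm p^2 + 2 * inner p q + norm q^2"
  by (simp add: power2_norm_eq_inner inner_add_left inner_add_right inner_commute)

lemma le_if_le_minus_small_multiples:
  fixes X Y c :: real
  assumes "\<And>t. 0 < t \<Longrightarrow> t \<le> 1 \<Longrightarrow> Y - t * c \<le> X" and "0 \<le> c"
  shows "Y \<le> X"
proof (rule ccontr)
  assume "\<not> Y \<le> X"
  define t where "t = min 1 ((Y - X) / (c + 1))"
  have t: "0 < t" "t \<le> 1" using \<open>\<not> Y \<le> X\<close> assms(2) by (auto simp: t_def)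
  have "t * c \<le> (Y - X) / (c + 1) * c"
    using assms(2) t by (intro mult_right_mono) (auto simp: t_def)
  also have "\<dots> < Y - X" using assms(2) \<open>\<not> Y \<le> X\<close> by (simp add: field_simps)
  finally show False using assms(1)[OF t] by linarith
qed

lemma larger_root_quadratic:
  fixes a B D :: real
  assumes "a = (B + sqrt (B^2 + D)) / 2" "B > 0" "D \<ge> 0"
  shows "a > 0" "a^2 = B * a + D / 4"
proof -
  have "2 * a = B + sqrt (B^2 + D)" using assms(1) by simp
  moreover have "sqrt (B^2 + D) \<ge> 0" using assms(3) by simp
  ultimately show "a > 0" using assms(2) by linarith
  have "sqrt (B^2 + D) = 2 * a - B" using assms(1) by simp
  moreover have "(sqrt (B^2 + D))^2 = B^2 + D" using assms(3) by simp
  ultimately have "(2 * a - B)^2 = B^2 + D" by simp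
  then show "a^2 = B * a + D / 4" by (simp add: power2_eq_square algebra_simps)
qed

lemma quadratic_vertex_form:
  fixes p q c w :: "'a::real_inner" and \<alpha> \<beta> :: real
  assumes "\<alpha> + \<beta> \<noteq> 0"
  defines "m \<equiv> (\<alpha> / (\<alpha> + \<beta>)) *\<^sub>R p + (\<beta> / (\<alpha> + \<beta>)) *\<^sub>R q - (1 / (\<alpha> + \<beta>)) *\<^sub>R c"
  defines "\<Phi> \<equiv> \<lambda>w. \<alpha> / 2 * norm (w - p)^2 + \<beta> / 2 * norm (w - q)^2 + inner c (w - q)"
  shows "\<Phi> w = \<Phi> m + (\<alpha> + \<beta>) / 2 * norm (w - m)^2"
proof -
  define d where "d = w - m"
  have "(\<alpha> + \<beta>) *\<^sub>R m = \<alpha> *\<^sub>R p + \<beta> *\<^sub>R q - c"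
    using assms(1) by (simp add: m_def scaleR_diff_right scaleR_add_right)
  then have "\<alpha> *\<^sub>R (m - p) + \<beta> *\<^sub>R (m - q) + c = 0" by (simp add: algebra_simps)
  then have "inner (\<alpha> *\<^sub>R (m - p) + \<beta> *\<^sub>R (m - q) + c) d = 0" by simp
  then have stationary: "\<alpha> * inner (m - p) d + \<beta> * inner (m - q) d + inner c d = 0"
    by (simp add: inner_add_left)
  have "\<Phi> w = \<alpha> / 2 * norm ((m - p) + d)^2 + \<beta> / 2 * norm ((m - q) + d)^2 + inner c ((m - q) + d)"
    by (simp add: \<Phi>_def d_def algebra_simps)
  also have "\<dots> = \<Phi> m + (\<alpha> + \<beta>) / 2 * norm d^2"
    unfolding norm_add_square \<Phi>_def using stationary
    by (simp add: inner_add_right algebra_simps add_divide_distrib)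
  finally show ?thesis by (simp add: d_def)
qed

lemma quadratic_convex_combination:
  fixes z u b v :: "'a::real_inner" and a A c \<mu> :: real
  assumes "A + a \<noteq> 0"
  defines "q \<equiv> \<lambda>w. c + inner v (w - b) + \<mu> / 2 * norm (w - b)^2"
  shows "a * q z + A * q u
    = (A + a) * q ((a / (A + a)) *\<^sub>R z + (A / (A + a)) *\<^sub>R u)
      + \<mu> * a * A / (2 * (A + a)) * norm (z - u)^2"
proof -
  define S where "S = A + a"
  define s where "s = a / S"
  define p where "p = z - b"
  define r where "r = u - b"
  have S: "S \<noteq> 0" using assms(1) by (simp add: S_def)
  have s: "a = s * S" "A = (1 - s) * S" "A / S = 1 - s"
    using S by (simp_all add: s_def S_def field_simps)
  have zt: "(a / S) *\<^sub>R z + (A / S) *\<^sub>R u - b = s *\<^sub>R p + (1 - s) *\<^sub>R r"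
    by (simp add: s(3) s_def[symmetric] p_def r_def algebra_simps)
  have N1: "norm (s *\<^sub>R p + (1 - s) *\<^sub>R r)^2
      = s^2 * norm p^2 + 2 * s * (1 - s) * inner p r + (1 - s)^2 * norm r^2"
    unfolding norm_add_square by (simp add: power_mult_distrib)
  have N2: "norm (z - u)^2 = norm p^2 - 2 * inner p r + norm r^2"
  proof -
    have "z - u = p + - r" by (simp add: p_def r_def)
    then show ?thesis by (simp only: norm_add_square) simp
  qed
  have "a * q z + A * q u
      = s * S * (c + inner v p + \<mu> / 2 * norm p^2) + (1 - s) * S * (c + inner v r + \<mu> / 2 * norm r^2)"
    by (simp add: q_def p_def r_def s(1)[symmetric] s(2)[symmetric])
  also have "\<dots> = S * (c + inner v (s *\<^sub>R p + (1 - s) *\<^sub>R r) + \<mu> / 2 * norm (s *\<^sub>R p + (1 - s) *\<^sub>R r)^2)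
      + \<mu> * s * (1 - s) * S / 2 * norm (z - u)^2"
    unfolding N1 N2 by (simp add: inner_add_right inner_diff_right power2_eq_square field_simps)
  also have "\<mu> * s * (1 - s) * S / 2 = \<mu> * a * A / (2 * S)"
    using S by (simp add: s(1,2))
  finally show ?thesis
    unfolding S_def[symmetric] q_def zt by simp
qed

lemma relative_error_lower_bound:
  fixes v w y xt :: "'a::real_inner" and lam \<mu> \<epsilon> \<sigma> :: real
  assumes "lam > 0" "\<mu> \<ge> 0"
    and "norm (lam *\<^sub>R v + y - xt)^2 / (1 + lam * \<mu>) + 2 * lam * \<epsilon> \<le> \<sigma>^2 * norm (y - xt)^2"
  shows "(1 - \<sigma>^2) / (2 * lam) * norm (y - xt)^2
    \<le> inner v (w - y) - \<epsilon> + \<mu> / 2 * norm (w - y)^2 + 1 / (2 * lam) * norm (w - xt)^2"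
proof -
  define u where "u = w - y"
  define s where "s = y - xt"
  define r where "r = lam *\<^sub>R v + s"
  define L where "L = 1 + lam * \<mu>"
  have L: "L > 0" using assms(1,2) by (simp add: L_def add_pos_nonneg)
  have error: "norm r^2 / L + 2 * lam * \<epsilon> \<le> \<sigma>^2 * norm s^2"
    using assms(3) by (simp add: r_def s_def L_def algebra_simps)
  have expand: "lam * (inner v u + \<mu> / 2 * norm u^2) + 1 / 2 * norm (u + s)^2
      = L / 2 * norm u^2 + inner r u + 1 / 2 * norm s^2"
    unfolding norm_add_square by (simp add: L_def r_def inner_add_left inner_commute algebra_simps)
  have "0 \<le> norm (L *\<^sub>R u + r)^2" by simp
  then have "0 \<le> L^2 * norm u^2 + 2 * L * inner u r + norm r^2"
    unfolding norm_add_square by (simp add: power_mult_distrib abs_of_pos[OF L])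
  then have minimum: "-(norm r^2) / (2 * L) \<le> L / 2 * norm u^2 + inner r u"
    using L by (simp add: field_simps power2_eq_square inner_commute)
  have "lam * ((1 - \<sigma>^2) / (2 * lam) * norm s^2) = 1 / 2 * norm s^2 - \<sigma>^2 / 2 * norm s^2"
    using assms(1) by (simp add: field_simps)
  also have "\<dots> \<le> 1 / 2 * norm s^2 - norm r^2 / (2 * L) - lam * \<epsilon>"
    using error L by (simp add: field_simps)
  also have "\<dots> \<le> lam * (inner v u + \<mu> / 2 * norm u^2) + 1 / 2 * norm (u + s)^2 - lam * \<epsilon>"
    using minimum expand by linarith
  also have "\<dots> = lam * (inner v u - \<epsilon> + \<mu> / 2 * norm u^2 + 1 / (2 * lam) * norm (u + s)^2)"
    using assms(1) by (simp add: field_simps)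
  finally have "(1 - \<sigma>^2) / (2 * lam) * norm s^2
      \<le> inner v u - \<epsilon> + \<mu> / 2 * norm u^2 + 1 / (2 * lam) * norm (u + s)^2"
    using assms(1) mult_le_cancel_left_pos by blast
  then show ?thesis by (simp add: u_def s_def)
qed

lemma strongly_convex_subgradient_inequality:
  fixes g :: "'a::real_inner \<Rightarrow> ereal"
  assumes "strongly_convex_fun \<mu> g" "\<mu> \<ge> 0" "\<And>p. g p \<noteq> -\<infinity>"
    and "u \<in> subdiff g y" "g y = ereal gy"
  shows "ereal (gy + inner u (w - y) + \<mu> / 2 * norm (w - y)^2) \<le> g w"
proof (cases "g w")
  case (real gw)
  have "gy + inner u (w - y) + \<mu> / 2 * norm (w - y)^2 - t * (\<mu> / 2 * norm (w - y)^2) \<le> gw"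
    if t: "0 < t" "t \<le> 1" for t
  proof -
    define p where "p = t *\<^sub>R w + (1 - t) *\<^sub>R y"
    have "ereal (gy + inner u (p - y)) \<le> g p"
      using assms(4) unfolding subdiff_def eps_subdiff_def by (auto simp: assms(5) elim!: allE[of _ p])
    also have "g p \<le> ereal t * g w + ereal (1 - t) * g y - ereal (\<mu> / 2 * t * (1 - t) * norm (w - y)^2)"
      using assms(1) t unfolding strongly_convex_fun_def p_def by auto
    finally have "gy + t * inner u (w - y) \<le> t * gw + (1 - t) * gy - \<mu> / 2 * t * (1 - t) * norm (w - y)^2"
      by (simp add: p_def real assms(5) algebra_simps)
    then have "t * (gy + inner u (w - y) + \<mu> / 2 * norm (w - y)^2 - t * (\<mu> / 2 * norm (w - y)^2)) \<le> t * gw"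
      by (simp add: algebra_simps add_divide_distrib diff_divide_distrib)
    then show ?thesis using t mult_le_cancel_left_pos by blast
  qed
  then have "gy + inner u (w - y) + \<mu> / 2 * norm (w - y)^2 \<le> gw"
    by (rule le_if_le_minus_small_multiples) (use assms(2) in auto)
  then show ?thesis by (simp add: real)
qed (use assms(3) in auto)

lemma eps_subdiff_imp_finite:
  fixes f :: "'a::real_inner \<Rightarrow> ereal"
  assumes "proper_fun f" "u \<in> eps_subdiff f \<epsilon> y"
  shows "\<bar>f y\<bar> \<noteq> \<infinity>"
proof -
  obtain w where w: "f w \<noteq> \<infinity>" using assms(1) unfolding proper_fun_def by auto
  have "f y + ereal (inner u (w - y)) - ereal \<epsilon> \<le> f w"
    using assms(2) unfolding eps_subdiff_def by auto
  then have "f y \<noteq> \<infinity>" using w by auto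
  moreover have "f y \<noteq> -\<infinity>" using assms(1) unfolding proper_fun_def by auto
  ultimately show ?thesis by auto
qed

locale algorithm1_run =
  fixes f g :: "'a::euclidean_space \<Rightarrow> ereal" and \<mu> \<sigma> :: real
    and x y v :: "nat \<Rightarrow> 'a" and eps lam a A :: "nat \<Rightarrow> real" and xt :: "nat \<Rightarrow> 'a"
  assumes f_proper: "proper_fun f" and g_proper: "proper_fun g"
    and mu_pos: "\<mu> > 0" and g_strongly_convex: "strongly_convex_fun \<mu> g"
    and runs: "algorithm1 f g \<mu> \<sigma> x y v eps lam a A xt"
begin

lemma A_0: "A 0 = 0"
  and lam_pos: "lam (Suc k) > 0"
  and a_Suc: "a (Suc k) = ((1 + 2 * \<mu> * A k) * lam (Suc k)
      + sqrt (((1 + 2 * \<mu> * A k) * lam (Suc k))^2 + 4 * (1 + \<mu> * A k) * A k * lam (Suc k))) / 2"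
  and xt_eq: "xt k = ((a (Suc k) - \<mu> * A k * lam (Suc k)) / (A k + a (Suc k))) *\<^sub>R x k
      + ((A k + \<mu> * A k * lam (Suc k)) / (A k + a (Suc k))) *\<^sub>R y k"
  and v_Suc: "\<exists>u w. u \<in> eps_subdiff f (eps (Suc k)) (y (Suc k)) \<and> w \<in> subdiff g (y (Suc k))
      \<and> v (Suc k) = u + w"
  and relative_error: "norm (lam (Suc k) *\<^sub>R v (Suc k) + y (Suc k) - xt k)^2 / (1 + lam (Suc k) * \<mu>)
      + 2 * lam (Suc k) * eps (Suc k) \<le> \<sigma>^2 * norm (y (Suc k) - xt k)^2"
  and A_Suc: "A (Suc k) = A k + a (Suc k)"
  and x_Suc: "x (Suc k) = ((1 + \<mu> * A k) / (1 + \<mu> * A (Suc k))) *\<^sub>R x k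
      + (\<mu> * a (Suc k) / (1 + \<mu> * A (Suc k))) *\<^sub>R y (Suc k)
      - (a (Suc k) / (1 + \<mu> * A (Suc k))) *\<^sub>R v (Suc k)"
  using runs unfolding algorithm1_def by blast+

lemma a_pos_quadratic_if_A_nonneg:
  assumes "A k \<ge> 0"
  shows "a (Suc k) > 0"
    and "a (Suc k)^2 = (1 + 2 * \<mu> * A k) * lam (Suc k) * a (Suc k) + (1 + \<mu> * A k) * A k * lam (Suc k)"
proof -
  have "(1 + 2 * \<mu> * A k) * lam (Suc k) > 0"
    using assms mu_pos lam_pos[of k] by (simp add: add_pos_nonneg)
  moreover have "4 * (1 + \<mu> * A k) * A k * lam (Suc k) \<ge> 0"
    using assms mu_pos lam_pos[of k] by simp
  ultimately show "a (Suc k) > 0"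
    and "a (Suc k)^2 = (1 + 2 * \<mu> * A k) * lam (Suc k) * a (Suc k) + (1 + \<mu> * A k) * A k * lam (Suc k)"
    using larger_root_quadratic[OF a_Suc] by (simp_all add: algebra_simps)
qed

lemma A_nonneg: "A k \<ge> 0"
  by (induction k) (simp_all add: A_0 A_Suc a_pos_quadratic_if_A_nonneg add_nonneg_pos less_imp_le)

lemma a_pos: "a (Suc k) > 0"
  using a_pos_quadratic_if_A_nonneg(1)[OF A_nonneg] .

lemma A_Suc_pos: "A (Suc k) > 0"
  using A_nonneg[of k] a_pos[of k] by (simp add: A_Suc)

lemma lam_mul_eq_a_square:
  "lam (Suc k) * ((1 + \<mu> * A k) * A (Suc k) + \<mu> * A k * a (Suc k)) = a (Suc k)^2"
  using a_pos_quadratic_if_A_nonneg(2)[OF A_nonneg] by (simp add: A_Suc algebra_simps)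

text \<open>
  Real-valued forms of h(y^k), gamma_k and A_k Gamma_k. The value h_real 0 is junk, since h(y^0)
  may be infinite, but it only ever occurs multiplied by A 0 = 0.
\<close>

definition h_real :: "nat \<Rightarrow> real" where
  "h_real k = real_of_ereal (f (y k) + g (y k))"

definition gamma_real :: "nat \<Rightarrow> 'a \<Rightarrow> real" where
  "gamma_real k w = h_real k - eps k + inner (v k) (w - y k) + \<mu> / 2 * norm (w - y k)^2"

lemma f_g_Suc_finite: "\<exists>r s. f (y (Suc k)) = ereal r \<and> g (y (Suc k)) = ereal s"
proof -
  obtain u w where "u \<in> eps_subdiff f (eps (Suc k)) (y (Suc k))" "w \<in> eps_subdiff g 0 (y (Suc k))"
    using v_Suc[of k] unfolding subdiff_def by blast
  then have "\<bar>f (y (Suc k))\<bar> \<noteq> \<infinity>" "\<bar>g (y (Suc k))\<bar> \<noteq> \<infinity>"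
    by (simp_all add: eps_subdiff_imp_finite f_proper g_proper)
  then show ?thesis by (cases "f (y (Suc k))"; cases "g (y (Suc k))") auto
qed

lemma h_Suc_eq: "f (y (Suc k)) + g (y (Suc k)) = ereal (h_real (Suc k))"
  using f_g_Suc_finite[of k] by (auto simp: h_real_def)

lemma gam_Suc_eq: "gam f g \<mu> y v eps (Suc k) w = ereal (gamma_real (Suc k) w)"
  by (simp add: gam_def gamma_real_def h_Suc_eq)

lemma gamma_real_le_h: "ereal (gamma_real (Suc k) w) \<le> f w + g w"
proof -
  obtain u u' where u: "u \<in> eps_subdiff f (eps (Suc k)) (y (Suc k))" "u' \<in> subdiff g (y (Suc k))"
    and v: "v (Suc k) = u + u'"
    using v_Suc[of k] by blast
  obtain r s where rs: "f (y (Suc k)) = ereal r" "g (y (Suc k)) = ereal s"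
    using f_g_Suc_finite[of k] by blast
  have "ereal (r + inner u (w - y (Suc k)) - eps (Suc k)) \<le> f w"
    using u(1) unfolding eps_subdiff_def by (auto simp: rs)
  moreover have "ereal (s + inner u' (w - y (Suc k)) + \<mu> / 2 * norm (w - y (Suc k))^2) \<le> g w"
    using g_proper mu_pos unfolding proper_fun_def
    by (intro strongly_convex_subgradient_inequality[OF g_strongly_convex _ _ u(2) rs(2)]) auto
  ultimately have "ereal (r + inner u (w - y (Suc k)) - eps (Suc k))
      + ereal (s + inner u' (w - y (Suc k)) + \<mu> / 2 * norm (w - y (Suc k))^2) \<le> f w + g w"
    by (rule add_mono)
  then show ?thesis by (simp add: gamma_real_def h_real_def rs v inner_add_left algebra_simps)
qed

definition A_Gamma_real :: "nat \<Rightarrow> 'a \<Rightarrow> real" where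
  "A_Gamma_real k w = (\<Sum>j\<in>{1..k}. a j * gamma_real j w)"

definition Phi :: "nat \<Rightarrow> 'a \<Rightarrow> real" where
  "Phi k w = A_Gamma_real k w + 1 / 2 * norm (w - x 0)^2"

lemma A_Gam_eq: "ereal (A k) * Gam f g \<mu> y v eps a A k w = ereal (A_Gamma_real k w)"
proof (cases k)
  case 0
  then show ?thesis by (simp add: Gam_def A_Gamma_real_def)
next
  case (Suc m)
  have "Gam f g \<mu> y v eps a A k w = (\<Sum>j\<in>{1..k}. ereal (a j / A k) * gam f g \<mu> y v eps j w)"
    using Suc by (simp add: Gam_def)
  also have "\<dots> = (\<Sum>j\<in>{1..k}. ereal (a j / A k * gamma_real j w))"
  proof (rule sum.cong)
    fix j assume "j \<in> {1..k}"
    then obtain i where "j = Suc i" by (cases j) auto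
    then show "ereal (a j / A k) * gam f g \<mu> y v eps j w = ereal (a j / A k * gamma_real j w)"
      by (simp add: gam_Suc_eq)
  qed simp
  also have "\<dots> = ereal (A_Gamma_real k w / A k)"
    by (simp add: A_Gamma_real_def sum_divide_distrib)
  finally show ?thesis using A_Suc_pos[of m] Suc by simp
qed

lemma Phi_Suc: "Phi (Suc k) w = Phi k w + a (Suc k) * gamma_real (Suc k) w"
  by (simp add: Phi_def A_Gamma_real_def)

lemma Phi_vertex_form: "Phi k w = Phi k (x k) + (1 + \<mu> * A k) / 2 * norm (w - x k)^2"
proof (induction k arbitrary: w)
  case 0
  then show ?case by (simp add: Phi_def A_Gamma_real_def A_0)
next
  case (Suc k)
  define \<alpha> where "\<alpha> = 1 + \<mu> * A k"
  define \<beta> where "\<beta> = \<mu> * a (Suc k)"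
  define c where "c = a (Suc k) *\<^sub>R v (Suc k)"
  define Q where "Q = (\<lambda>w. \<alpha> / 2 * norm (w - x k)^2 + \<beta> / 2 * norm (w - y (Suc k))^2 + inner c (w - y (Suc k)))"
  define K where "K = Phi k (x k) + a (Suc k) * (h_real (Suc k) - eps (Suc k))"
  have \<alpha>\<beta>: "\<alpha> + \<beta> = 1 + \<mu> * A (Suc k)" by (simp add: \<alpha>_def \<beta>_def A_Suc algebra_simps)
  have "0 \<le> \<mu> * A (Suc k)" using mu_pos A_nonneg[of "Suc k"] by simp
  then have nonzero: "\<alpha> + \<beta> \<noteq> 0" unfolding \<alpha>\<beta> by linarith
  have x: "x (Suc k) = (\<alpha> / (\<alpha> + \<beta>)) *\<^sub>R x k + (\<beta> / (\<alpha> + \<beta>)) *\<^sub>R y (Suc k) - (1 / (\<alpha> + \<beta>)) *\<^sub>R c"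
    unfolding x_Suc \<alpha>\<beta> by (simp add: \<alpha>_def \<beta>_def c_def mult.commute)
  have Q_vertex: "Q w = Q (x (Suc k)) + (\<alpha> + \<beta>) / 2 * norm (w - x (Suc k))^2"
    unfolding Q_def x by (rule quadratic_vertex_form[OF nonzero])
  have Phi_K: "Phi (Suc k) w = K + Q w" for w
    unfolding Phi_Suc Suc.IH[of w] K_def Q_def gamma_real_def \<alpha>_def \<beta>_def c_def by (simp add: field_simps)
  show ?case using Q_vertex Phi_K[of w] Phi_K[of "x (Suc k)"] unfolding \<alpha>\<beta> by simp
qed

lemma bet_eq: "bet f g \<mu> x y v eps a A k = ereal (Phi k (x k))"
proof -
  have "bet f g \<mu> x y v eps a A k = (INF w. ereal (Phi k w))"
    unfolding bet_def Phi_def A_Gam_eq by simp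
  also have "\<dots> = ereal (Phi k (x k))"
  proof (rule antisym)
    show "(INF w. ereal (Phi k w)) \<le> ereal (Phi k (x k))" by (rule INF_lower) simp
    have "Phi k (x k) \<le> Phi k w" for w
      using Phi_vertex_form[of k w] mu_pos A_nonneg[of k] by simp
    then show "ereal (Phi k (x k)) \<le> (INF w. ereal (Phi k w))" by (simp add: INF_greatest)
  qed
  finally show ?thesis .
qed

lemma A_h_eq: "ereal (A k) * (f (y k) + g (y k)) = ereal (A k * h_real k)"
  by (cases k) (simp_all add: A_0 h_Suc_eq zero_ereal_def[symmetric])

lemma A_gamma_real_le_A_h: "A k * gamma_real (Suc k) (y k) \<le> A k * h_real k"
proof (cases k)
  case (Suc m)
  have "gamma_real (Suc k) (y k) \<le> h_real k"
    using gamma_real_le_h[of k "y k"] h_Suc_eq[of m] Suc by simp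
  then show ?thesis using A_nonneg[of k] by (rule mult_left_mono)
qed (simp add: A_0)

definition ztil :: "nat \<Rightarrow> 'a \<Rightarrow> 'a" where
  "ztil k z = (a (Suc k) / A (Suc k)) *\<^sub>R z + (A k / A (Suc k)) *\<^sub>R y k"

definition Delta :: "nat \<Rightarrow> 'a \<Rightarrow> real" where
  "Delta k z = (1 + \<mu> * A k) * A (Suc k) / (2 * a (Suc k)^2) * norm (ztil k z - ztil k (x k))^2
    + \<mu> * A k / (2 * a (Suc k)) * norm (ztil k z - y k)^2"

lemma gamma_real_combination:
  "a (Suc k) * gamma_real (Suc k) z + A k * gamma_real (Suc k) (y k)
    = A (Suc k) * gamma_real (Suc k) (ztil k z)
      + \<mu> * a (Suc k) * A k / (2 * A (Suc k)) * norm (z - y k)^2"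
proof -
  have "A k + a (Suc k) \<noteq> 0" using A_Suc_pos[of k] by (simp add: A_Suc)
  from quadratic_convex_combination[OF this, where c = "h_real (Suc k) - eps (Suc k)"
      and v = "v (Suc k)" and b = "y (Suc k)" and \<mu> = \<mu> and z = z and u = "y k"]
  show ?thesis by (simp add: gamma_real_def ztil_def A_Suc)
qed

lemma ztil_minus_ztil: "ztil k z - ztil k w = (a (Suc k) / A (Suc k)) *\<^sub>R (z - w)"
  by (simp add: ztil_def algebra_simps)

lemma ztil_minus_y: "ztil k z - y k = (a (Suc k) / A (Suc k)) *\<^sub>R (z - y k)"
proof -
  have coefficient: "A k / A (Suc k) - 1 = - (a (Suc k) / A (Suc k))"
    using A_Suc_pos[of k] by (simp add: A_Suc field_simps)
  have "ztil k z - y k = (a (Suc k) / A (Suc k)) *\<^sub>R z + (A k / A (Suc k) - 1) *\<^sub>R y k"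
    by (simp add: ztil_def algebra_simps)
  also have "\<dots> = (a (Suc k) / A (Suc k)) *\<^sub>R (z - y k)"
    unfolding coefficient by (simp add: algebra_simps)
  finally show ?thesis .
qed

lemma A_Delta:
  "A (Suc k) * Delta k z
    = (1 + \<mu> * A k) / 2 * norm (z - x k)^2 + \<mu> * a (Suc k) * A k / (2 * A (Suc k)) * norm (z - y k)^2"
proof -
  have "norm (ztil k z - ztil k (x k))^2 = (a (Suc k) / A (Suc k))^2 * norm (z - x k)^2"
    "norm (ztil k z - y k)^2 = (a (Suc k) / A (Suc k))^2 * norm (z - y k)^2"
    by (simp_all only: ztil_minus_ztil ztil_minus_y norm_scaleR power_mult_distrib power2_abs)
  then show ?thesis
    using a_pos[of k] A_Suc_pos[of k] by (simp add: Delta_def power_divide field_simps power2_eq_square)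
qed

lemma A_ztil_minus_xt:
  "A (Suc k) *\<^sub>R (ztil k z - xt k) = a (Suc k) *\<^sub>R (z - x k) + (\<mu> * A k * lam (Suc k)) *\<^sub>R (x k - y k)"
proof -
  have "A (Suc k) *\<^sub>R ztil k z = a (Suc k) *\<^sub>R z + A k *\<^sub>R y k"
    using A_Suc_pos[of k] by (simp add: ztil_def scaleR_add_right)
  moreover have "A (Suc k) *\<^sub>R xt k
      = (a (Suc k) - \<mu> * A k * lam (Suc k)) *\<^sub>R x k + (A k + \<mu> * A k * lam (Suc k)) *\<^sub>R y k"
    using A_Suc_pos[of k] by (simp add: xt_eq A_Suc[symmetric] scaleR_add_right)
  ultimately show ?thesis by (simp add: scaleR_diff_right algebra_simps)
qed

lemma Delta_eq:
  "Delta k z = 1 / (2 * lam (Suc k)) * (norm (ztil k z - xt k)^2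
    + \<mu> * (1 + \<mu> * A k) * lam (Suc k)^2 * A k / (a (Suc k) * A (Suc k)) * norm (x k - y k)^2)"
proof -
  define d where "d = z - x k"
  define e where "e = x k - y k"
  have A: "A (Suc k) > 0" and a: "a (Suc k) > 0" and lam: "lam (Suc k) > 0"
    using A_Suc_pos a_pos lam_pos by auto
  have "A (Suc k)^2 * norm (ztil k z - xt k)^2 = norm (A (Suc k) *\<^sub>R (ztil k z - xt k))^2"
    by (simp add: power_mult_distrib)
  also have "\<dots> = a (Suc k)^2 * norm d^2 + 2 * a (Suc k) * (\<mu> * A k * lam (Suc k)) * inner d e
      + (\<mu> * A k * lam (Suc k))^2 * norm e^2"
    unfolding A_ztil_minus_xt norm_add_square by (simp add: d_def e_def power_mult_distrib)
  finally have xt_part: "A (Suc k)^2 * norm (ztil k z - xt k)^2 = \<dots>" .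
  have "norm (z - y k)^2 = norm d^2 + 2 * inner d e + norm e^2"
    unfolding norm_add_square[symmetric] by (simp add: d_def e_def)
  then have Delta_part: "A (Suc k) * Delta k z = (1 + \<mu> * A k) / 2 * norm d^2
      + \<mu> * a (Suc k) * A k / (2 * A (Suc k)) * (norm d^2 + 2 * inner d e + norm e^2)"
    by (simp add: A_Delta d_def)
  \<comment> \<open>after clearing denominators, both sides agree modulo the equation defining a (Suc k)\<close>
  have "2 * lam (Suc k) * a (Suc k) * A (Suc k)^2 * (A (Suc k) * Delta k z)
      = lam (Suc k) * a (Suc k) * A (Suc k) * ((1 + \<mu> * A k) * A (Suc k) * norm d^2
        + \<mu> * a (Suc k) * A k * (norm d^2 + 2 * inner d e + norm e^2))"
    using A unfolding Delta_part by (simp add: field_simps power2_eq_square)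
  also have "\<dots> = A (Suc k) * (a (Suc k) * (A (Suc k)^2 * norm (ztil k z - xt k)^2)
      + \<mu> * (1 + \<mu> * A k) * lam (Suc k)^2 * A k * A (Suc k) * norm e^2)"
    unfolding xt_part using lam_mul_eq_a_square[of k] by algebra
  also have "\<dots> = 2 * lam (Suc k) * a (Suc k) * A (Suc k)^2 * (A (Suc k) * (1 / (2 * lam (Suc k))
      * (norm (ztil k z - xt k)^2 + \<mu> * (1 + \<mu> * A k) * lam (Suc k)^2 * A k / (a (Suc k) * A (Suc k))
        * norm e^2)))"
    using A a lam by (simp add: field_simps power2_eq_square)
  finally show ?thesis using A a lam by (simp add: e_def eq_divide_eq mult.commute)
qed

lemma Phi_lower_bound:
  "Phi k (x k) + A (Suc k) * (gamma_real (Suc k) (ztil k z) + Delta k z) \<le> A k * h_real k + Phi (Suc k) z"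
  using Phi_Suc[of k z] Phi_vertex_form[of k z] gamma_real_combination[of k z] A_Delta[of k z]
    A_gamma_real_le_A_h[of k]
  by (simp add: algebra_simps)

lemma gamma_real_Delta_lower_bound:
  "A (Suc k) * h_real (Suc k) + (1 - \<sigma>^2) / 2 * A (Suc k) / lam (Suc k) * norm (y (Suc k) - xt k)^2
      + \<mu> * (1 + \<mu> * A k) * lam (Suc k) * A k / (2 * a (Suc k)) * norm (x k - y k)^2
    \<le> A (Suc k) * (gamma_real (Suc k) (ztil k z) + Delta k z)"
proof -
  have "(1 - \<sigma>^2) / (2 * lam (Suc k)) * norm (y (Suc k) - xt k)^2
      \<le> gamma_real (Suc k) (ztil k z) - h_real (Suc k) + 1 / (2 * lam (Suc k)) * norm (ztil k z - xt k)^2"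
    using relative_error_lower_bound[OF lam_pos less_imp_le[OF mu_pos] relative_error, of k "ztil k z"]
    by (simp add: gamma_real_def)
  then have "A (Suc k) * ((1 - \<sigma>^2) / (2 * lam (Suc k)) * norm (y (Suc k) - xt k)^2)
      \<le> A (Suc k) * (gamma_real (Suc k) (ztil k z) - h_real (Suc k)
        + 1 / (2 * lam (Suc k)) * norm (ztil k z - xt k)^2)"
    using less_imp_le[OF A_Suc_pos[of k]] by (rule mult_left_mono)
  moreover have "A (Suc k) * Delta k z = A (Suc k) / (2 * lam (Suc k)) * norm (ztil k z - xt k)^2
      + \<mu> * (1 + \<mu> * A k) * lam (Suc k) * A k / (2 * a (Suc k)) * norm (x k - y k)^2"
    using lam_pos[of k] a_pos[of k] A_Suc_pos[of k]
    unfolding Delta_eq by (simp add: field_simps power2_eq_square)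
  ultimately show ?thesis by (simp add: algebra_simps)
qed

end

theorem lemma2p3:
  fixes f g :: "'a::euclidean_space \<Rightarrow> ereal"
    and \<mu> \<sigma> :: real
    and x y v xt :: "nat \<Rightarrow> 'a"
    and eps lam a A :: "nat \<Rightarrow> real"
  assumes "proper_fun f" "closed_fun f" "convex_fun f"
    and "proper_fun g" "closed_fun g" "convex_fun g"
    and "\<exists>z. f z + g z \<noteq> \<infinity>"
    and "\<mu> > 0" and "strongly_convex_fun \<mu> g"
    and "algorithm1 f g \<mu> \<sigma> x y v eps lam a A xt"
  shows "\<forall>k (z::'a).
    let zt = (a (Suc k) / A (Suc k)) *\<^sub>R z + (A k / A (Suc k)) *\<^sub>R y k;
        zk = (a (Suc k) / A (Suc k)) *\<^sub>R x k + (A k / A (Suc k)) *\<^sub>R y k;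
        \<Delta> = (1 + \<mu> * A k) * A (Suc k) / (2 * a (Suc k)^2) * norm (zt - zk)^2
            + \<mu> * A k / (2 * a (Suc k)) * norm (zt - y k)^2;
        \<gamma> = gam f g \<mu> y v eps (Suc k);
        h = (\<lambda>w. f w + g w)
    in
      ereal (a (Suc k)) * \<gamma> z + ereal (A k) * \<gamma> (y k)
        = ereal (A (Suc k)) * \<gamma> zt
          + ereal (\<mu> * a (Suc k) * A k / (2 * A (Suc k)) * norm (z - y k)^2)
    \<and> ereal (A k) * h (y k) + ereal (A (Suc k)) * Gam f g \<mu> y v eps a A (Suc k) z
          + ereal (1/2 * norm (z - x 0)^2)
        \<ge> bet f g \<mu> x y v eps a A k + ereal (A (Suc k)) * (\<gamma> zt + ereal \<Delta>)
    \<and> \<Delta> = 1 / (2 * lam (Suc k)) * (norm (zt - xt k)^2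
            + \<mu> * (1 + \<mu> * A k) * lam (Suc k)^2 * A k / (a (Suc k) * A (Suc k))
              * norm (x k - y k)^2)
    \<and> ereal (A k) * h (y k) + ereal (A (Suc k)) * Gam f g \<mu> y v eps a A (Suc k) z
          + ereal (1/2 * norm (z - x 0)^2)
        \<ge> bet f g \<mu> x y v eps a A k + ereal (A (Suc k)) * h (y (Suc k))
          + ereal ((1 - \<sigma>^2) / 2 * A (Suc k) / lam (Suc k) * norm (y (Suc k) - xt k)^2)
          + ereal (\<mu> * (1 + \<mu> * A k) * lam (Suc k) * A k / (2 * a (Suc k)) * norm (x k - y k)^2)"
proof -
  interpret algorithm1_run f g \<mu> \<sigma> x y v eps lam a A xt
    using assms by unfold_locales
  show ?thesis
    unfolding Let_def ztil_def[symmetric] Delta_def[symmetric]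
    unfolding gam_Suc_eq A_h_eq h_Suc_eq A_Gam_eq bet_eq
    apply (intro allI conjI)
    subgoal for k z using gamma_real_combination[of k z] by simp
    subgoal for k z using Phi_lower_bound[of k z] by (simp add: Phi_def)
    subgoal for k z by (rule Delta_eq)
    subgoal for k z using Phi_lower_bound[of k z] gamma_real_Delta_lower_bound[of k z] by (simp add: Phi_def)
    done
qed

end
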